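(* Let $D$ be a connected locally finite C-homogeneous digraph and let $x\in VD$. Then neither the subdigraph induced by $N^+(x)$ nor the subdigraph induced by $N^-(x)$ is isomorphic to the directed cycle $C_4$ of length 4.
   Context: A digraph has an irreflexive, antisymmetric edge relation; connectedness and local finiteness refer to the underlying undirected graph. $D$ is C-homogeneous if every isomorphism between finite connected induced subdigraphs extends to an automorphism of $D$. $N^+(x)=\{y: xy\in ED\}$, $N^-(x)=\{y: yx\in ED\}$. *)

theory Defs
  imports Main
begin

definition digraph :: "'a set \<Rightarrow> ('a \<Rightarrow> 'a \<Rightarrow> bool) \<Rightarrow> bool" where
  "digraph V E \<longleftrightarrow> (\<forall>x y. E x y \<longrightarrow> x \<in> V \<and> y \<in> V)
     \<and> (\<forall>x. \<not> E x x) \<and> (\<forall>x y. E x y \<longrightarrow> \<not> E y x)"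

definition out_nbhd :: "('a \<Rightarrow> 'a \<Rightarrow> bool) \<Rightarrow> 'a \<Rightarrow> 'a set" where
  "out_nbhd E x = {y. E x y}"

definition in_nbhd :: "('a \<Rightarrow> 'a \<Rightarrow> bool) \<Rightarrow> 'a \<Rightarrow> 'a set" where
  "in_nbhd E x = {y. E y x}"

definition induced_connected :: "('a \<Rightarrow> 'a \<Rightarrow> bool) \<Rightarrow> 'a set \<Rightarrow> bool" where
  "induced_connected E A \<longleftrightarrow> A \<noteq> {} \<and>
     (\<forall>x\<in>A. \<forall>y\<in>A. (\<lambda>u v. u \<in> A \<and> v \<in> A \<and> (E u v \<or> E v u))\<^sup>*\<^sup>* x y)"

definition locally_finite :: "'a set \<Rightarrow> ('a \<Rightarrow> 'a \<Rightarrow> bool) \<Rightarrow> bool" where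
  "locally_finite V E \<longleftrightarrow> (\<forall>x\<in>V. finite (out_nbhd E x \<union> in_nbhd E x))"

definition induced_iso :: "('a \<Rightarrow> 'a \<Rightarrow> bool) \<Rightarrow> 'a set \<Rightarrow> 'a set \<Rightarrow> ('a \<Rightarrow> 'a) \<Rightarrow> bool" where
  "induced_iso E A B f \<longleftrightarrow> bij_betw f A B \<and> (\<forall>x\<in>A. \<forall>y\<in>A. E x y \<longleftrightarrow> E (f x) (f y))"

definition C_homogeneous :: "'a set \<Rightarrow> ('a \<Rightarrow> 'a \<Rightarrow> bool) \<Rightarrow> bool" where
  "C_homogeneous V E \<longleftrightarrow>
     (\<forall>A B f. A \<subseteq> V \<and> B \<subseteq> V \<and> finite A \<and> induced_connected E A
        \<and> induced_iso E A B f \<longrightarrow>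
        (\<exists>g. induced_iso E V V g \<and> (\<forall>x\<in>A. g x = f x)))"

definition C4_edge :: "nat \<Rightarrow> nat \<Rightarrow> bool" where
  "C4_edge i j \<longleftrightarrow> i < 4 \<and> j = (i + 1) mod 4"

definition iso_to_C4 :: "('a \<Rightarrow> 'a \<Rightarrow> bool) \<Rightarrow> 'a set \<Rightarrow> bool" where
  "iso_to_C4 E A \<longleftrightarrow> (\<exists>h. bij_betw h A {0..<4} \<and>
      (\<forall>x\<in>A. \<forall>y\<in>A. E x y \<longleftrightarrow> C4_edge (h x) (h y)))"

end

theory Submission
  imports Defs
begin

text \<open>C-homogeneity makes the digraph vertex-transitive, arc-transitive and transitive on
  induced 2-arcs \<open>u \<rightarrow> v \<rightarrow> w\<close> with \<open>u\<close>, \<open>w\<close> non-adjacent; so if one out-neighbourhood is a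
  directed 4-cycle, all are. An automorphism fixing an arc \<open>u \<rightarrow> v\<close> then fixes \<open>N\<^sup>+(u)\<close>, a
  4-cycle through \<open>v\<close>, and hence \<open>N\<^sup>+(v)\<close> pointwise: for an arc \<open>x \<rightarrow> a\<close> at most one
  out-neighbour of \<open>a\<close> is non-adjacent to \<open>x\<close>. With \<open>N\<^sup>+(x) = a \<rightarrow> b \<rightarrow> c \<rightarrow> d \<rightarrow> a\<close> and
  \<open>N\<^sup>+(a) = b \<rightarrow> b\<^sub>2 \<rightarrow> b\<^sub>3 \<rightarrow> b\<^sub>4 \<rightarrow> b\<close>, the successor \<open>y\<close> of \<open>a\<close> in \<open>N\<^sup>+(d)\<close> is one of the
  \<open>b\<^sub>i\<close>. Tracking \<open>y\<close> under automorphisms taking \<open>x \<rightarrow> a\<close> to \<open>x \<rightarrow> b\<close> and \<open>d \<rightarrow> a\<close> to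
  \<open>x \<rightarrow> a\<close> yields either two non-neighbours of \<open>x\<close> among the \<open>b\<^sub>i\<close> or the edge
  \<open>b \<rightarrow> b\<^sub>3\<close>, which the cycle on \<open>N\<^sup>+(a)\<close> forbids. In-neighbourhoods are out-neighbourhoods
  of the converse digraph.\<close>

definition dicycle4 :: "('a \<Rightarrow> 'a \<Rightarrow> bool) \<Rightarrow> 'a set \<Rightarrow> 'a \<Rightarrow> 'a \<Rightarrow> 'a \<Rightarrow> 'a \<Rightarrow> bool" where
  "dicycle4 E S a b c d \<longleftrightarrow> distinct [a, b, c, d] \<and> S = {a, b, c, d} \<and>
     (\<forall>u\<in>S. \<forall>v\<in>S. E u v \<longleftrightarrow> (u, v) \<in> {(a, b), (b, c), (c, d), (d, a)})"

lemma dicycle4_rotate: "dicycle4 E S a b c d \<Longrightarrow> dicycle4 E S b c d a"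
  unfolding dicycle4_def by auto

lemma dicycle4_edges:
  assumes "dicycle4 E S a b c d"
  shows "E a b" "E b c" "E c d" "E d a" "\<not> E a c" "\<not> E c a" "\<not> E b d" "\<not> E d b"
  using assms unfolding dicycle4_def by auto

lemma dicycle4_vertex_set: "dicycle4 E S a b c d \<Longrightarrow> S = {a, b, c, d}"
  unfolding dicycle4_def by blast

lemma dicycle4_distinct: "dicycle4 E S a b c d \<Longrightarrow> distinct [a, b, c, d]"
  unfolding dicycle4_def by blast

lemma dicycle4_start_at:
  assumes "dicycle4 E S a b c d" "v \<in> S"
  obtains b' c' d' where "dicycle4 E S v b' c' d'"
proof -
  have "v = a \<or> v = b \<or> v = c \<or> v = d"
    using assms unfolding dicycle4_def by auto
  then show thesis
    using assms(1) dicycle4_rotate that by metis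
qed

lemma dicycle4_out_edge_iff: "dicycle4 E S a b c d \<Longrightarrow> v \<in> S \<Longrightarrow> E a v \<longleftrightarrow> v = b"
  unfolding dicycle4_def by auto

lemma dicycle4_in_edge_iff: "dicycle4 E S a b c d \<Longrightarrow> v \<in> S \<Longrightarrow> E v a \<longleftrightarrow> v = d"
  unfolding dicycle4_def by auto

lemma dicycle4_pred_unique:
  assumes "dicycle4 E S a b c d" "u \<in> S" "v \<in> S" "w \<in> S" "E v u" "E w u"
  shows "v = w"
proof -
  obtain b' c' d' where "dicycle4 E S u b' c' d'"
    using assms(1,2) by (rule dicycle4_start_at)
  then show ?thesis
    using assms(3-6) dicycle4_in_edge_iff by metis
qed

lemma dicycle4_unique:
  assumes C: "dicycle4 E S a b c d" and C': "dicycle4 E S a b' c' d'"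
  shows "b' = b \<and> c' = c \<and> d' = d"
proof -
  have mem: "b' \<in> S" "c' \<in> S" "d' \<in> S"
    using C' unfolding dicycle4_def by auto
  have "b' = b" "d' = d"
    using dicycle4_out_edge_iff[OF C mem(1)] dicycle4_in_edge_iff[OF C mem(3)]
      dicycle4_edges[OF C'] by auto
  moreover have "c' = c"
    using dicycle4_out_edge_iff[OF dicycle4_rotate[OF C] mem(2)]
      dicycle4_edges[OF C'] \<open>b' = b\<close> by auto
  ultimately show ?thesis by simp
qed

lemma dicycle4_converse: "dicycle4 E S a b c d \<Longrightarrow> dicycle4 (\<lambda>u v. E v u) S d c b a"
  unfolding dicycle4_def by auto

lemma iso_to_C4_dicycle4:
  assumes "iso_to_C4 E A"
  obtains a b c d where "dicycle4 E A a b c d"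
proof -
  obtain h where h: "bij_betw h A {0..<4}"
    and edge: "\<forall>u\<in>A. \<forall>v\<in>A. E u v \<longleftrightarrow> C4_edge (h u) (h v)"
    using assms unfolding iso_to_C4_def by blast
  define p where "p = inv_into A h"
  have p: "bij_betw p {0..<4} A"
    unfolding p_def by (rule bij_betw_inv_into[OF h])
  have four: "{0..<4::nat} = {0, 1, 2, 3}" by auto
  have A: "A = {p 0, p 1, p 2, p 3}"
    using p four by (simp add: bij_betw_def)
  have "distinct [p 0, p 1, p 2, p 3]"
    using p four by (simp add: bij_betw_def)
  moreover have "E (p i) (p j) \<longleftrightarrow> C4_edge i j" if "i < 4" "j < 4" for i j
  proof -
    have "i \<in> {0..<4}" "j \<in> {0..<4}" using that by auto
    then show ?thesis
      using edge bij_betw_apply[OF p] bij_betw_inv_into_right[OF h] unfolding p_def by auto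
  qed
  ultimately have "dicycle4 E A (p 0) (p 1) (p 2) (p 3)"
    unfolding dicycle4_def A by (simp add: C4_edge_def) metis
  then show thesis by (rule that)
qed

definition adjacent :: "('a \<Rightarrow> 'a \<Rightarrow> bool) \<Rightarrow> 'a \<Rightarrow> 'a \<Rightarrow> bool" where
  "adjacent E u v \<longleftrightarrow> E u v \<or> E v u"

abbreviation automorphism :: "'a set \<Rightarrow> ('a \<Rightarrow> 'a \<Rightarrow> bool) \<Rightarrow> ('a \<Rightarrow> 'a) \<Rightarrow> bool" where
  "automorphism V E g \<equiv> induced_iso E V V g"

lemma digraph_vertices: "digraph V E \<Longrightarrow> E u v \<Longrightarrow> u \<in> V \<and> v \<in> V"
  unfolding digraph_def by blast

lemma automorphism_edge_iff:
  "automorphism V E g \<Longrightarrow> u \<in> V \<Longrightarrow> v \<in> V \<Longrightarrow> E (g u) (g v) \<longleftrightarrow> E u v"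
  unfolding induced_iso_def by blast

lemma automorphism_adjacent_iff:
  "automorphism V E g \<Longrightarrow> u \<in> V \<Longrightarrow> v \<in> V \<Longrightarrow> adjacent E (g u) (g v) \<longleftrightarrow> adjacent E u v"
  unfolding adjacent_def by (simp add: automorphism_edge_iff)

lemma automorphism_image_out_nbhd:
  assumes dg: "digraph V E" and g: "automorphism V E g" and u: "u \<in> V"
  shows "g ` out_nbhd E u = out_nbhd E (g u)"
proof
  show "g ` out_nbhd E u \<subseteq> out_nbhd E (g u)"
  proof
    fix w assume "w \<in> g ` out_nbhd E u"
    then obtain z where z: "E u z" "w = g z"
      by (auto simp: out_nbhd_def)
    then have "z \<in> V"
      using digraph_vertices[OF dg] by blast
    then show "w \<in> out_nbhd E (g u)"
      using z automorphism_edge_iff[OF g u] by (simp add: out_nbhd_def)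
  qed
next
  show "out_nbhd E (g u) \<subseteq> g ` out_nbhd E u"
  proof
    fix w assume w: "w \<in> out_nbhd E (g u)"
    then have "w \<in> V"
      using digraph_vertices[OF dg] unfolding out_nbhd_def by blast
    then have "w \<in> g ` V"
      using g unfolding induced_iso_def bij_betw_def by simp
    then obtain z where "z \<in> V" "w = g z" by blast
    then show "w \<in> g ` out_nbhd E u"
      using w automorphism_edge_iff[OF g u] by (auto simp: out_nbhd_def)
  qed
qed

lemma automorphism_dicycle4:
  assumes g: "automorphism V E g" and "S \<subseteq> V" and C: "dicycle4 E S a b c d"
  shows "dicycle4 E (g ` S) (g a) (g b) (g c) (g d)"
proof -
  have S: "S = {a, b, c, d}" and V: "a \<in> V" "b \<in> V" "c \<in> V" "d \<in> V"
    using C \<open>S \<subseteq> V\<close> unfolding dicycle4_def by auto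
  have inj: "inj_on g V"
    using g unfolding induced_iso_def bij_betw_def by blast
  then have "distinct [g a, g b, g c, g d]"
    using C V unfolding dicycle4_def by (auto dest: inj_onD)
  then show ?thesis
    using C V unfolding dicycle4_def S
    by (simp add: automorphism_edge_iff[OF g] inj_on_eq_iff[OF inj])
qed

lemma automorphism_out_dicycle4:
  assumes dg: "digraph V E" and g: "automorphism V E g" and u: "u \<in> V"
    and C: "dicycle4 E (out_nbhd E u) a b c d"
  shows "dicycle4 E (out_nbhd E (g u)) (g a) (g b) (g c) (g d)"
proof -
  have "out_nbhd E u \<subseteq> V"
    using digraph_vertices[OF dg] by (auto simp: out_nbhd_def)
  then show ?thesis
    using automorphism_dicycle4[OF g _ C] automorphism_image_out_nbhd[OF dg g u] by simp
qed

lemma induced_connected_singleton: "induced_connected E {x}"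
  unfolding induced_connected_def by simp

lemma induced_connected_insert:
  assumes A: "induced_connected E A" and "a \<in> A" and "adjacent E a b"
  shows "induced_connected E (insert b A)"
proof -
  let ?R = "\<lambda>B u v. u \<in> B \<and> v \<in> B \<and> (E u v \<or> E v u)"
  have "(?R A)\<^sup>*\<^sup>* \<le> (?R (insert b A))\<^sup>*\<^sup>*"
    by (rule rtranclp_mono) auto
  then have lift: "(?R (insert b A))\<^sup>*\<^sup>* s t" if "s \<in> A" "t \<in> A" for s t
    using A that unfolding induced_connected_def by blast
  have "(?R (insert b A))\<^sup>*\<^sup>* a b" "(?R (insert b A))\<^sup>*\<^sup>* b a"
    using assms(2,3) unfolding adjacent_def by (auto intro!: r_into_rtranclp)
  then show ?thesis
    using lift \<open>a \<in> A\<close> unfolding induced_connected_def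
    by (blast intro: rtranclp_trans)
qed

lemma C_homogeneousD:
  assumes "C_homogeneous V E" "A \<subseteq> V" "B \<subseteq> V" "finite A" "induced_connected E A"
    "induced_iso E A B f"
  obtains g where "automorphism V E g" "\<And>x. x \<in> A \<Longrightarrow> g x = f x"
  using assms(1)[unfolded C_homogeneous_def, rule_format, of A B f] assms(2-6) by blast

lemma C_homogeneous_vertex_transitive:
  assumes dg: "digraph V E" and hom: "C_homogeneous V E" and "x \<in> V" "y \<in> V"
  obtains g where "automorphism V E g" "g x = y"
proof -
  have "{x} \<subseteq> V" "{y} \<subseteq> V"
    using assms(3,4) by auto
  moreover have "induced_iso E {x} {y} (\<lambda>_. y)"
    using dg unfolding induced_iso_def digraph_def bij_betw_def by auto
  ultimately obtain g where "automorphism V E g" "\<And>z. z \<in> {x} \<Longrightarrow> g z = y"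
    using C_homogeneousD[OF hom _ _ _ induced_connected_singleton] by blast
  then show thesis
    using that by blast
qed

lemma C_homogeneous_arc_transitive:
  assumes dg: "digraph V E" and hom: "C_homogeneous V E" and xa: "E x a" and uv: "E u v"
  obtains g where "automorphism V E g" "g x = u" "g a = v"
proof -
  let ?f = "\<lambda>z. if z = x then u else v"
  have V: "{a, x} \<subseteq> V" "{u, v} \<subseteq> V"
    using xa uv digraph_vertices[OF dg] by auto
  have no_back: "\<not> E a x" "\<not> E v u" "x \<noteq> a" "u \<noteq> v" and loopless: "\<And>z. \<not> E z z"
    using dg xa uv unfolding digraph_def by auto
  have "induced_connected E {a, x}"
    using induced_connected_insert[of E "{x}" x a, OF induced_connected_singleton singletonI] xa
    by (simp add: adjacent_def)
  moreover have "induced_iso E {a, x} {u, v} ?f"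
    using xa uv no_back loopless unfolding induced_iso_def bij_betw_def inj_on_def by auto
  ultimately obtain g where "automorphism V E g" "\<And>z. z \<in> {a, x} \<Longrightarrow> g z = ?f z"
    using C_homogeneousD[OF hom V] by blast
  then show thesis
    using that no_back by simp
qed

lemma C_homogeneous_two_arc:
  assumes dg: "digraph V E" and hom: "C_homogeneous V E"
    and uv: "E u v" and vw: "E v w" and vw': "E v w'"
    and "\<not> adjacent E u w" "\<not> adjacent E u w'"
  obtains g where "automorphism V E g" "g u = u" "g v = v" "g w = w'"
proof -
  let ?f = "\<lambda>z. if z = w then w' else z"
  have loopless: "\<And>z. \<not> E z z" and asym: "\<And>s t. E s t \<Longrightarrow> \<not> E t s"
    using dg unfolding digraph_def by auto
  have nonadj: "\<not> E u w" "\<not> E w u" "\<not> E u w'" "\<not> E w' u"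
    using assms(6,7) unfolding adjacent_def by auto
  have distinct: "u \<noteq> v" "v \<noteq> w" "v \<noteq> w'" "u \<noteq> w" "u \<noteq> w'"
    using loopless asym uv vw vw' by metis+
  have V: "{w, v, u} \<subseteq> V" "{w', v, u} \<subseteq> V"
    using uv vw vw' digraph_vertices[OF dg] by auto
  have "induced_connected E {v, u}"
    using induced_connected_insert[of E "{u}" u v, OF induced_connected_singleton singletonI] uv
    by (simp add: adjacent_def)
  then have "induced_connected E {w, v, u}"
    using induced_connected_insert[of E "{v, u}" v w] vw by (simp add: adjacent_def)
  moreover have "induced_iso E {w, v, u} {w', v, u} ?f"
    using distinct nonadj loopless asym[OF vw] asym[OF vw'] vw vw'
    unfolding induced_iso_def bij_betw_def inj_on_def by auto
  ultimately obtain g where "automorphism V E g" "\<And>z. z \<in> {w, v, u} \<Longrightarrow> g z = ?f z"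
    using C_homogeneousD[OF hom V] by blast
  then show thesis
    using that distinct by simp
qed

lemma digraph_converse: "digraph V E \<Longrightarrow> digraph V (\<lambda>u v. E v u)"
  unfolding digraph_def by auto

lemma C_homogeneous_converse: "C_homogeneous V E \<Longrightarrow> C_homogeneous V (\<lambda>u v. E v u)"
proof -
  have "induced_connected (\<lambda>u v. E v u) A = induced_connected E A" for A
    unfolding induced_connected_def by (simp add: disj_commute)
  moreover have "induced_iso (\<lambda>u v. E v u) A B f = induced_iso E A B f" for A B f
    unfolding induced_iso_def by blast
  ultimately show "C_homogeneous V E \<Longrightarrow> C_homogeneous V (\<lambda>u v. E v u)"
    unfolding C_homogeneous_def by simp
qed

lemma in_nbhd_eq_converse_out_nbhd: "in_nbhd E x = out_nbhd (\<lambda>u v. E v u) x"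
  unfolding in_nbhd_def out_nbhd_def by simp

text \<open>A hypothetical counterexample, refuted by \<open>no_vertex\<close> below.\<close>

locale C_homogeneous_out_C4 =
  fixes V :: "'a set" and E :: "'a \<Rightarrow> 'a \<Rightarrow> bool"
  assumes digraph: "digraph V E"
    and homogeneous: "C_homogeneous V E"
    and out_C4: "u \<in> V \<Longrightarrow> \<exists>a b c d. dicycle4 E (out_nbhd E u) a b c d"
begin

lemma out_dicycle4_from:
  assumes "E u v"
  obtains b c d where "dicycle4 E (out_nbhd E u) v b c d"
proof -
  obtain a b c d where C: "dicycle4 E (out_nbhd E u) a b c d"
    using out_C4 digraph_vertices[OF digraph assms] by blast
  have "v \<in> out_nbhd E u"
    using assms by (simp add: out_nbhd_def)
  then show thesis
    by (rule dicycle4_start_at[OF C _ that])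
qed

lemma automorphism_fixing_arc_fixes_out_nbhd:
  assumes g: "automorphism V E g" and uv: "E u v" and fixed: "g u = u" "g v = v"
    and vw: "E v w"
  shows "g w = w"
proof -
  have V: "u \<in> V" "v \<in> V"
    using digraph_vertices[OF digraph uv] by auto
  obtain t c d where Cu: "dicycle4 E (out_nbhd E u) v t c d"
    using out_dicycle4_from[OF uv] .
  have "dicycle4 E (out_nbhd E u) v (g t) (g c) (g d)"
    using automorphism_out_dicycle4[OF digraph g V(1) Cu] fixed by simp
  then have gt: "g t = t"
    using dicycle4_unique[OF Cu] by blast
  obtain p q r where Cv: "dicycle4 E (out_nbhd E v) t p q r"
    using out_dicycle4_from dicycle4_edges(1)[OF Cu] by blast
  have "w \<in> out_nbhd E v"
    using vw by (simp add: out_nbhd_def)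
  then have w: "w \<in> {t, p, q, r}"
    using dicycle4_vertex_set[OF Cv] by simp
  have "dicycle4 E (out_nbhd E v) t (g p) (g q) (g r)"
    using automorphism_out_dicycle4[OF digraph g V(2) Cv] fixed gt by simp
  then have "g p = p" "g q = q" "g r = r"
    using dicycle4_unique[OF Cv] by blast+
  with gt w show ?thesis
    by auto
qed

lemma two_arc_nonadjacent_unique:
  assumes "E u v" "E v w" "E v w'" "\<not> adjacent E u w" "\<not> adjacent E u w'"
  shows "w = w'"
proof -
  obtain g where g: "automorphism V E g" "g u = u" "g v = v" "g w = w'"
    using C_homogeneous_two_arc[OF digraph homogeneous assms] .
  then show ?thesis
    using automorphism_fixing_arc_fixes_out_nbhd[OF g(1) assms(1) g(2,3) assms(2)] by simp
qed

lemma rotation_automorphism: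
  assumes C: "dicycle4 E (out_nbhd E x) a b c d"
    and A: "dicycle4 E (out_nbhd E a) b b2 b3 b4"
    and dy: "E d y" and ay: "E a y"
  obtains r where "automorphism V E r" "r x = x" "r a = b" "r y = b2"
proof -
  have x_out: "E x a" "E x b"
    using dicycle4_vertex_set[OF C] by (auto simp: out_nbhd_def set_eq_iff)
  obtain r where r: "automorphism V E r" "r x = x" "r a = b"
    using C_homogeneous_arc_transitive[OF digraph homogeneous x_out] .
  have V: "x \<in> V" "a \<in> V" "d \<in> V" "y \<in> V"
    using digraph_vertices[OF digraph] x_out dy ay by blast+
  have "dicycle4 E (out_nbhd E x) b (r b) (r c) (r d)"
    using automorphism_out_dicycle4[OF digraph r(1) V(1) C] r(2,3) by simp
  then have rd: "r d = a"
    using dicycle4_unique[OF dicycle4_rotate[OF C]] by blast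
  have "E b (r y)" "E a (r y)"
    using automorphism_edge_iff[OF r(1)] V dy ay r(3) rd by metis+
  then have "r y = b2"
    using dicycle4_out_edge_iff[OF A] by (simp add: out_nbhd_def)
  then show thesis
    using that r by blast
qed

lemma nonadjacent_in_second_out_nbhd:
  assumes C: "dicycle4 E (out_nbhd E x) a b c d"
    and A: "dicycle4 E (out_nbhd E a) b b2 b3 b4"
    and dy: "E d y" and ay: "E a y"
  shows "y = b2 \<Longrightarrow> \<not> adjacent E x b4"
    and "y = b3 \<Longrightarrow> \<not> adjacent E x b3"
    and "y = b4 \<Longrightarrow> \<not> adjacent E x b2"
proof -
  have xa: "E x a" and da: "E d a"
    using dicycle4_vertex_set[OF C] dicycle4_edges[OF C] by (auto simp: out_nbhd_def set_eq_iff)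
  obtain h where h: "automorphism V E h" "h d = x" "h a = a"
    using C_homogeneous_arc_transitive[OF digraph homogeneous da xa] .
  have V: "a \<in> V" "b \<in> V" "d \<in> V" "y \<in> V"
    using digraph_vertices[OF digraph] dicycle4_edges(1)[OF C] da ay by blast+
  have "E x (h y)" "E a (h y)"
    using automorphism_edge_iff[OF h(1)] V dy ay h(2,3) by metis+
  then have hy: "h y = b"
    using dicycle4_out_edge_iff[OF C] by (simp add: out_nbhd_def)
  have "\<not> adjacent E d b"
    using dicycle4_edges[OF C] unfolding adjacent_def by blast
  then have hb: "\<not> adjacent E x (h b)"
    using automorphism_adjacent_iff[OF h(1) V(3,2)] h(2) by simp
  have hA: "dicycle4 E (out_nbhd E a) (h b) (h b2) (h b3) (h b4)"
    using automorphism_out_dicycle4[OF digraph h(1) V(1) A] h(3) by simp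
  show "\<not> adjacent E x b4" if "y = b2"
  proof -
    have "dicycle4 E (out_nbhd E a) b (h b3) (h b4) (h b)"
      using dicycle4_rotate[OF hA] hy that by simp
    then show ?thesis
      using dicycle4_unique[OF A] hb by simp
  qed
  show "\<not> adjacent E x b3" if "y = b3"
  proof -
    have "dicycle4 E (out_nbhd E a) b (h b4) (h b) (h b2)"
      using dicycle4_rotate[OF dicycle4_rotate[OF hA]] hy that by simp
    then show ?thesis
      using dicycle4_unique[OF A] hb by simp
  qed
  show "\<not> adjacent E x b2" if "y = b4"
  proof -
    have "dicycle4 E (out_nbhd E a) b (h b) (h b2) (h b3)"
      using dicycle4_rotate[OF dicycle4_rotate[OF dicycle4_rotate[OF hA]]] hy that by simp
    then show ?thesis
      using dicycle4_unique[OF A] hb by simp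
  qed
qed

lemma no_vertex: "x \<notin> V"
proof
  assume "x \<in> V"
  then obtain a b c d where C: "dicycle4 E (out_nbhd E x) a b c d"
    using out_C4 by blast
  have xa: "E x a" and ab: "E a b" and da: "E d a" and not_db: "\<not> E d b"
    using dicycle4_vertex_set[OF C] dicycle4_edges[OF C] by (auto simp: out_nbhd_def set_eq_iff)
  obtain b2 b3 b4 where A: "dicycle4 E (out_nbhd E a) b b2 b3 b4"
    using out_dicycle4_from[OF ab] .
  have a_out: "E a b2" "E a b3" "E a b4"
    using dicycle4_vertex_set[OF A] by (auto simp: out_nbhd_def set_eq_iff)
  have distinct: "b \<noteq> b2" "b \<noteq> b3" "b \<noteq> b4" "b2 \<noteq> b3" "b2 \<noteq> b4" "b3 \<noteq> b4"
    using dicycle4_distinct[OF A] by auto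
  obtain y p q where D: "dicycle4 E (out_nbhd E d) a y p q"
    using out_dicycle4_from[OF da] .
  have dy: "E d y" and ay: "E a y"
    using dicycle4_vertex_set[OF D] dicycle4_edges(1)[OF D] by (auto simp: out_nbhd_def set_eq_iff)
  have "y \<in> {b, b2, b3, b4}"
    using ay dicycle4_vertex_set[OF A] by (simp add: out_nbhd_def set_eq_iff)
  with dy not_db have y: "y \<in> {b2, b3, b4}"
    by blast
  obtain r where r: "automorphism V E r" "r x = x" "r a = b" "r y = b2"
    using rotation_automorphism[OF C A dy ay] .
  have V: "x \<in> V" "a \<in> V" "b3 \<in> V" "y \<in> V"
    using digraph_vertices[OF digraph] xa a_out ay by blast+
  have adjacent_b2: "adjacent E x b2 \<longleftrightarrow> adjacent E x y"
    using automorphism_adjacent_iff[OF r(1) V(1,4)] r(2,4) by simp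
  have not_out: "\<not> E x z" if "E a z" "z \<noteq> b" for z
    using that dicycle4_out_edge_iff[OF C, of z] by (auto simp: out_nbhd_def)
  have unique: "z = z'" if "E a z" "E a z'" "\<not> adjacent E x z" "\<not> adjacent E x z'" for z z'
    using two_arc_nonadjacent_unique[OF xa that] .
  consider "y = b2" | "y = b3" | "y = b4"
    using y by blast
  then show False
  proof cases
    case 1
    then have "\<not> adjacent E x b4"
      using nonadjacent_in_second_out_nbhd(1)[OF C A dy ay] by blast
    then have "adjacent E x b2" "adjacent E x b3"
      using unique a_out distinct by metis+
    then have b2x: "E b2 x" and b3x: "E b3 x"
      using not_out a_out distinct unfolding adjacent_def by blast+
    have "dicycle4 E (out_nbhd E b) (r b) b2 (r b3) (r b4)"
      using automorphism_out_dicycle4[OF digraph r(1) V(2) A] r(3,4) 1 by simp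
    then have b_rb3: "E b (r b3)" and b2_rb3: "E b2 (r b3)"
      using dicycle4_vertex_set dicycle4_edges(2) by (fastforce simp: out_nbhd_def set_eq_iff)+
    have "E (r b3) x"
      using automorphism_edge_iff[OF r(1) V(3,1)] b3x r(2) by simp
    moreover obtain p0 p1 p2 p3 where "dicycle4 E (out_nbhd E b2) p0 p1 p2 p3"
      using out_C4 digraph_vertices[OF digraph b2x] by blast
    ultimately have "r b3 = b3"
      using dicycle4_pred_unique b2x b2_rb3 b3x dicycle4_edges(2)[OF A]
      by (fastforce simp: out_nbhd_def)
    then show False
      using b_rb3 dicycle4_edges(5)[OF A] by simp
  next
    case 2
    then have "\<not> adjacent E x b2" "\<not> adjacent E x b3"
      using nonadjacent_in_second_out_nbhd(2)[OF C A dy ay] adjacent_b2 by simp_all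
    then show False
      using unique a_out distinct by blast
  next
    case 3
    then have "\<not> adjacent E x b2" "\<not> adjacent E x b4"
      using nonadjacent_in_second_out_nbhd(3)[OF C A dy ay] adjacent_b2 by simp_all
    then show False
      using unique a_out distinct by blast
  qed
qed

end

lemma C_homogeneous_out_nbhd_not_dicycle4:
  assumes dg: "digraph V E" and hom: "C_homogeneous V E" and x: "x \<in> V"
  shows "\<not> dicycle4 E (out_nbhd E x) a b c d"
proof
  assume C: "dicycle4 E (out_nbhd E x) a b c d"
  have "C_homogeneous_out_C4 V E"
  proof (rule C_homogeneous_out_C4.intro[OF dg hom])
    fix u assume "u \<in> V"
    then obtain g where g: "automorphism V E g" "g x = u"
      using C_homogeneous_vertex_transitive[OF dg hom x] by blast
    show "\<exists>a b c d. dicycle4 E (out_nbhd E u) a b c d"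
      using automorphism_out_dicycle4[OF dg g(1) x C] g(2) by blast
  qed
  then show False
    using C_homogeneous_out_C4.no_vertex x by metis
qed

theorem lemma3p3:
  fixes V :: "'a set" and E :: "'a \<Rightarrow> 'a \<Rightarrow> bool" and x :: 'a
  assumes "digraph V E"
    and "induced_connected E V"
    and "locally_finite V E"
    and "C_homogeneous V E"
    and "x \<in> V"
  shows "\<not> iso_to_C4 E (out_nbhd E x) \<and> \<not> iso_to_C4 E (in_nbhd E x)"
proof
  show "\<not> iso_to_C4 E (out_nbhd E x)"
  proof
    assume "iso_to_C4 E (out_nbhd E x)"
    then obtain a b c d where "dicycle4 E (out_nbhd E x) a b c d"
      by (rule iso_to_C4_dicycle4)
    then show False
      using C_homogeneous_out_nbhd_not_dicycle4[OF assms(1,4,5)] by blast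
  qed
  show "\<not> iso_to_C4 E (in_nbhd E x)"
  proof
    assume "iso_to_C4 E (in_nbhd E x)"
    then obtain a b c d where "dicycle4 E (in_nbhd E x) a b c d"
      by (rule iso_to_C4_dicycle4)
    then have "dicycle4 (\<lambda>u v. E v u) (out_nbhd (\<lambda>u v. E v u) x) d c b a"
      unfolding in_nbhd_eq_converse_out_nbhd by (rule dicycle4_converse)
    then show False
      using C_homogeneous_out_nbhd_not_dicycle4[OF digraph_converse[OF assms(1)]
          C_homogeneous_converse[OF assms(4)] assms(5)] by blast
  qed
qed

end
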